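(* Let $N$ be a finite set with $|N|\geq 2$. An inequality $\langle o,\eta\rangle\le u$ for $\eta\in P_N$, where $o\in\mathbb{R}^{\Upsilon}$ and $u\in\mathbb{R}$, is facet-defining for $P_N$ and tight at all full graphs over $N$ (i.e. $\langle o,\eta_H\rangle=u$ for every full graph $H$) if and only if there exists an extreme standardized supermodular set function $m:\mathcal{P}(N)\to\mathbb{R}$ such that $o(a|B)=m(\{a\}\cup B)-m(B)$ for all $(a|B)\in\Upsilon$ and $u$ is the common value of $\langle o,\eta_H\rangle$ over full graphs $H$ over $N$.
   Context: $\mathrm{DAG}(N)$ is the set of acyclic directed graphs over $N$; $\mathrm{pa}_G(a)$ is the parent set of $a$ in $G$. A full graph is an acyclic directed graph over $N$ in which every pair of distinct nodes is adjacent. $\Upsilon=\{(a|B): a\in N,\ \emptyset\neq B\subseteq N\setminus\{a\}\}$; for $G\in\mathrm{DAG}(N)$, $\eta_G\in\mathbb{R}^{\Upsilon}$ has $\eta_G(a|B)=1$ if $B=\mathrm{pa}_G(a)$ and $0$ otherwise; $P_N=\mathrm{conv}\{\eta_G:G\in\mathrm{DAG}(N)\}$ is the family-variable polytope. A set function $m:\mathcal{P}(N)\to\mathbb{R}$ is standardized if $m(S)=0$ whenever $|S|\le 1$, and supermodular if $m(U)+m(V)\le m(U\cup V)+m(U\cap V)$ for all $U,V\subseteq N$. The standardized supermodular functions form a pointed polyhedral cone; $m$ is extreme if it generates an extreme ray of this cone. *)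

theory Defs
  imports Complex_Main
begin

(* Acyclic directed graphs over N, represented as edge relations G \<subseteq> N \<times> N
   ((b,a) \<in> G means an arrow b \<rightarrow> a). *)
definition DAGs :: "'a set \<Rightarrow> ('a \<times> 'a) set set" where
  "DAGs N = {G. G \<subseteq> N \<times> N \<and> acyclic G}"

definition pa :: "('a \<times> 'a) set \<Rightarrow> 'a \<Rightarrow> 'a set" where
  "pa G a = {b. (b, a) \<in> G}"

definition full_graph :: "'a set \<Rightarrow> ('a \<times> 'a) set \<Rightarrow> bool" where
  "full_graph N G \<longleftrightarrow> G \<in> DAGs N \<and>
     (\<forall>a\<in>N. \<forall>b\<in>N. a \<noteq> b \<longrightarrow> (a, b) \<in> G \<or> (b, a) \<in> G)"

definition Ups :: "'a set \<Rightarrow> ('a \<times> 'a set) set" where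
  "Ups N = {(a, B). a \<in> N \<and> B \<noteq> {} \<and> B \<subseteq> N - {a}}"

(* Vectors in R^Upsilon are functions; only the values on Ups N matter. *)
type_synonym 'a vecU = "'a \<times> 'a set \<Rightarrow> real"

definition inprod :: "'a set \<Rightarrow> 'a vecU \<Rightarrow> 'a vecU \<Rightarrow> real" where
  "inprod N x y = (\<Sum>p\<in>Ups N. x p * y p)"

definition eta :: "'a set \<Rightarrow> ('a \<times> 'a) set \<Rightarrow> 'a vecU" where
  "eta N G = (\<lambda>(a, B). if (a, B) \<in> Ups N \<and> B = pa G a then 1 else 0)"

definition famPoly :: "'a set \<Rightarrow> 'a vecU set" where
  "famPoly N = {x. \<exists>l :: ('a \<times> 'a) set \<Rightarrow> real.
      (\<forall>G\<in>DAGs N. 0 \<le> l G) \<and> (\<Sum>G\<in>DAGs N. l G) = 1 \<and>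
      x = (\<lambda>p. \<Sum>G\<in>DAGs N. l G * eta N G p)}"

definition aff_indep :: "'a vecU set \<Rightarrow> bool" where
  "aff_indep T \<longleftrightarrow> finite T \<and>
     (\<forall>c :: 'a vecU \<Rightarrow> real. (\<Sum>t\<in>T. c t) = 0 \<and> (\<forall>p. (\<Sum>t\<in>T. c t * t p) = 0)
        \<longrightarrow> (\<forall>t\<in>T. c t = 0))"

definition affdim :: "'a vecU set \<Rightarrow> int" where
  "affdim S = (if S = {} then -1
     else int (GREATEST k. \<exists>T. T \<subseteq> S \<and> aff_indep T \<and> card T = k) - 1)"

definition facet_defining :: "'a set \<Rightarrow> 'a vecU \<Rightarrow> real \<Rightarrow> bool" where
  "facet_defining N ob u \<longleftrightarrow>
     (\<forall>x\<in>famPoly N. inprod N ob x \<le> u) \<and>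
     affdim {x\<in>famPoly N. inprod N ob x = u} = affdim (famPoly N) - 1"

definition standardized :: "'a set \<Rightarrow> ('a set \<Rightarrow> real) \<Rightarrow> bool" where
  "standardized N m \<longleftrightarrow> (\<forall>S\<subseteq>N. card S \<le> 1 \<longrightarrow> m S = 0)"

definition supermodular :: "'a set \<Rightarrow> ('a set \<Rightarrow> real) \<Rightarrow> bool" where
  "supermodular N m \<longleftrightarrow>
     (\<forall>U\<subseteq>N. \<forall>V\<subseteq>N. m U + m V \<le> m (U \<union> V) + m (U \<inter> V))"

definition std_supermod :: "'a set \<Rightarrow> ('a set \<Rightarrow> real) \<Rightarrow> bool" where
  "std_supermod N m \<longleftrightarrow> standardized N m \<and> supermodular N m"

(* m generates an extreme ray of the cone of standardized supermodular functions on P(N) *)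
definition extreme_ssm :: "'a set \<Rightarrow> ('a set \<Rightarrow> real) \<Rightarrow> bool" where
  "extreme_ssm N m \<longleftrightarrow> std_supermod N m \<and> (\<exists>S\<subseteq>N. m S \<noteq> 0) \<and>
     (\<forall>m1 m2. std_supermod N m1 \<and> std_supermod N m2 \<and> (\<forall>S\<subseteq>N. m S = m1 S + m2 S)
        \<longrightarrow> (\<exists>c\<ge>0. \<forall>S\<subseteq>N. m1 S = c * m S))"

end

theory Submission
  imports Defs
begin

(*
  Every standardized supermodular m gives o_m(a|B) = m({a} u B) - m(B) with <o_m, eta_G> <= m(N)
  for every DAG G (peel off sinks and use that marginals of m increase), with equality at full
  graphs. Conversely, if <o, eta> <= u is valid and tight at all full graphs, the score of a full
  graph over S does not depend on the chosen ordering of S; this defines a standardized m with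
  o = o_m, and validity at one DAG realising the increments m(N) - m(U u V),
  m(U) - m(U n V), m(V) - m(U n V) and m(U n V) is exactly supermodularity. So the valid
  inequalities tight at full graphs form a cone linearly isomorphic to the standardized
  supermodular cone, and it remains to match facets with extreme rays. As P_N is full-dimensional
  and contains 0, the right-hand side u is positive and the face is a facet iff it contains
  |Upsilon| linearly independent points. For a facet, any summand m1 of m = m1 + m2 is valid with
  bound m1(N) and hence tight on the face, which forces o_m1 to be a multiple of o. If the face is
  not a facet, a nonzero functional h vanishing on it gives valid inequalities o +- e h tight at
  full graphs, splitting m into two non-proportional halves.
*)

section \<open>Homogeneous linear systems and affine dimension\<close>

lemma homogeneous_system_nontrivial_solution:
  fixes R :: "('j \<Rightarrow> real) set"
  assumes "finite R" "finite D" "card R < card D"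
  shows "\<exists>x. (\<exists>j\<in>D. x j \<noteq> 0) \<and> (\<forall>r\<in>R. (\<Sum>j\<in>D. x j * r j) = 0)"
  using assms
proof (induction "card R" arbitrary: R D rule: less_induct)
  case less
  show ?case
  proof (cases "\<exists>r\<in>R. \<exists>j0\<in>D. r j0 \<noteq> 0")
    case False
    from less.prems obtain j where "j \<in> D" by fastforce
    with False show ?thesis by (intro exI[of _ "\<lambda>_. 1"]) auto
  next
    case True
    then obtain r j0 where r: "r \<in> R" and j0: "j0 \<in> D" "r j0 \<noteq> 0" by blast
    define D' where "D' = D - {j0}"
    define reduce where "reduce q = (\<lambda>j. q j - q j0 / r j0 * r j)" for q :: "'j \<Rightarrow> real"
    \<comment> \<open>Gaussian elimination of the unknown \<open>j0\<close> by means of the equation \<open>r\<close>\<close>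
    have card_less: "card (R - {r}) < card R"
      using r less.prems(1) by (intro card_Diff1_less)
    moreover have "card (reduce ` (R - {r})) < card D'"
      using card_image_le[of "R - {r}" reduce] less.prems r j0 card_less
      unfolding D'_def by auto
    ultimately obtain x where x: "\<exists>j\<in>D'. x j \<noteq> 0" "\<forall>q\<in>R - {r}. (\<Sum>j\<in>D'. x j * reduce q j) = 0"
      using less.hyps[of "reduce ` (R - {r})" D'] card_image_le[of "R - {r}" reduce] less.prems
      unfolding D'_def by fastforce
    define y where "y = x(j0 := - (\<Sum>j\<in>D'. x j * r j) / r j0)"
    have sum_y: "(\<Sum>j\<in>D. y j * q j) = y j0 * q j0 + (\<Sum>j\<in>D'. x j * q j)" for q
    proof -
      have "(\<Sum>j\<in>D. y j * q j) = y j0 * q j0 + (\<Sum>j\<in>D'. y j * q j)"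
        unfolding D'_def using j0 less.prems(2) by (simp add: sum.remove)
      also have "(\<Sum>j\<in>D'. y j * q j) = (\<Sum>j\<in>D'. x j * q j)"
        unfolding y_def D'_def by (intro sum.cong) auto
      finally show ?thesis .
    qed
    have "(\<Sum>j\<in>D. y j * q j) = 0" if "q \<in> R" for q
    proof (cases "q = r")
      case True
      then show ?thesis using sum_y[of r] j0(2) by (simp add: y_def field_simps)
    next
      case False
      then have "(\<Sum>j\<in>D'. x j * q j) - q j0 / r j0 * (\<Sum>j\<in>D'. x j * r j) = 0"
        using x(2) that unfolding reduce_def
        by (simp add: sum_subtractf sum_distrib_left algebra_simps)
      then show ?thesis using sum_y[of q] j0(2) by (simp add: y_def field_simps)
    qed
    moreover have "\<exists>j\<in>D. y j \<noteq> 0" using x(1) unfolding y_def D'_def by auto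
    ultimately show ?thesis by blast
  qed
qed

definition lin_indep :: "('i \<Rightarrow> real) set \<Rightarrow> bool" where
  "lin_indep T \<longleftrightarrow> finite T \<and>
     (\<forall>c :: ('i \<Rightarrow> real) \<Rightarrow> real. (\<forall>p. (\<Sum>t\<in>T. c t * t p) = 0) \<longrightarrow> (\<forall>t\<in>T. c t = 0))"

lemma lin_indep_finite: "lin_indep T \<Longrightarrow> finite T"
  unfolding lin_indep_def by simp

lemma lin_indep_card_le:
  fixes T :: "('i \<Rightarrow> real) set"
  assumes "lin_indep T" "finite D" "\<And>t p. t \<in> T \<Longrightarrow> p \<notin> D \<Longrightarrow> t p = 0"
  shows "card T \<le> card D"
proof (rule ccontr)
  assume too_many: "\<not> ?thesis"
  define R :: "(('i \<Rightarrow> real) \<Rightarrow> real) set" where "R = (\<lambda>p t. t p) ` D"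
  have "card R < card T"
    using card_image_le[OF assms(2), of "\<lambda>p (t :: 'i \<Rightarrow> real). t p"] too_many unfolding R_def by linarith
  then obtain c where c: "\<exists>t\<in>T. c t \<noteq> 0" "\<forall>p\<in>D. (\<Sum>t\<in>T. c t * t p) = 0"
    using homogeneous_system_nontrivial_solution[of R T] lin_indep_finite[OF assms(1)] assms(2)
    unfolding R_def by auto
  have "(\<Sum>t\<in>T. c t * t p) = 0" for p
  proof (cases "p \<in> D")
    case False
    then show ?thesis using assms(3) by (intro sum.neutral) simp
  qed (use c(2) in simp)
  with c(1) assms(1) show False unfolding lin_indep_def by blast
qed

lemma aff_indep_card_le:
  assumes "aff_indep T" "finite D" "\<And>t p. t \<in> T \<Longrightarrow> p \<notin> D \<Longrightarrow> t p = 0"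
  shows "card T \<le> card D + 1"
proof (rule ccontr)
  assume "\<not> ?thesis"
  define R :: "('a vecU \<Rightarrow> real) set" where "R = insert (\<lambda>_. 1) ((\<lambda>p t. t p) ` D)"
  have "card R \<le> card D + 1"
    using card_image_le[OF assms(2), of "\<lambda>p (t :: 'a vecU). t p"] assms(2)
    unfolding R_def by (simp add: card_insert_if)
  with \<open>\<not> ?thesis\<close> obtain c where c: "\<exists>t\<in>T. c t \<noteq> 0" "\<forall>r\<in>R. (\<Sum>t\<in>T. c t * r t) = 0"
    using homogeneous_system_nontrivial_solution[of R T] assms(1,2)
    unfolding aff_indep_def R_def by fastforce
  have "(\<Sum>t\<in>T. c t * t p) = 0" for p
  proof (cases "p \<in> D")
    case False
    then show ?thesis using assms(3) by (intro sum.neutral) simp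
  qed (use c(2) in \<open>simp add: R_def\<close>)
  moreover have "sum c T = 0" using c(2) unfolding R_def by simp
  ultimately show False using c(1) assms(1) unfolding aff_indep_def by blast
qed

lemma lin_indep_imp_aff_indep: "lin_indep T \<Longrightarrow> aff_indep T"
  unfolding lin_indep_def aff_indep_def by blast

lemma aff_indep_imp_lin_indep_on_hyperplane:
  assumes "aff_indep T" "\<And>t. t \<in> T \<Longrightarrow> (\<Sum>p\<in>D. w p * t p) = u" "u \<noteq> 0"
  shows "lin_indep T"
  unfolding lin_indep_def
proof (intro conjI allI impI)
  show "finite T" using assms(1) unfolding aff_indep_def by simp
  fix c assume c: "\<forall>p. (\<Sum>t\<in>T. c t * t p) = 0"
  then have "(\<Sum>t\<in>T. c t * t p) = 0" for p by blast
  then have "0 = (\<Sum>p\<in>D. w p * (\<Sum>t\<in>T. c t * t p))" by simp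
  also have "\<dots> = (\<Sum>t\<in>T. c t * (\<Sum>p\<in>D. w p * t p))"
    by (simp add: sum_distrib_left sum.swap[of _ D] mult.left_commute)
  also have "\<dots> = u * sum c T" using assms(2) by (simp add: sum_distrib_left mult.commute)
  finally have "sum c T = 0" using assms(3) by simp
  with c assms(1) show "\<forall>t\<in>T. c t = 0" unfolding aff_indep_def by blast
qed

lemma zero_notin_lin_indep:
  fixes T :: "('i \<Rightarrow> real) set"
  assumes "lin_indep T"
  shows "(\<lambda>_. 0) \<notin> T"
proof
  define c :: "('i \<Rightarrow> real) \<Rightarrow> real" where "c t = (if t = (\<lambda>_. 0) then 1 else 0)" for t
  have "(\<Sum>t\<in>T. c t * t p) = 0" for p by (intro sum.neutral) (simp add: c_def)
  moreover assume "(\<lambda>_. 0) \<in> T"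
  ultimately show False using assms unfolding lin_indep_def c_def by fastforce
qed

lemma aff_indep_insert_zero:
  assumes "lin_indep T"
  shows "aff_indep (insert (\<lambda>_. 0) T)"
  unfolding aff_indep_def
proof (intro conjI allI impI)
  have "finite T" using lin_indep_finite[OF assms] .
  then show "finite (insert (\<lambda>_. 0) T)" by simp
  have "(\<lambda>_. 0) \<notin> T" using zero_notin_lin_indep[OF assms] .
  fix c :: "'a vecU \<Rightarrow> real"
  assume c: "sum c (insert (\<lambda>_. 0) T) = 0 \<and> (\<forall>p. (\<Sum>t\<in>insert (\<lambda>_. 0) T. c t * t p) = 0)"
  have "(\<Sum>t\<in>T. c t * t p) = 0" for p
    using c[THEN conjunct2, rule_format, of p] \<open>finite T\<close> \<open>(\<lambda>_. 0) \<notin> T\<close> by simp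
  then have "\<forall>t\<in>T. c t = 0" using assms unfolding lin_indep_def by blast
  with c \<open>finite T\<close> \<open>(\<lambda>_. 0) \<notin> T\<close> show "\<forall>t\<in>insert (\<lambda>_. 0) T. c t = 0" by simp
qed

lemma maximal_lin_indep_subset:
  fixes S :: "('i \<Rightarrow> real) set"
  assumes "finite D" "\<And>t p. t \<in> S \<Longrightarrow> p \<notin> D \<Longrightarrow> t p = 0"
  obtains T where "T \<subseteq> S" "lin_indep T" "\<And>y. y \<in> S \<Longrightarrow> y \<notin> T \<Longrightarrow> \<not> lin_indep (insert y T)"
proof -
  define P where "P n \<longleftrightarrow> (\<exists>T\<subseteq>S. lin_indep T \<and> card T = n)" for n
  have "P 0" unfolding P_def lin_indep_def by (intro exI[of _ "{}"]) simp
  have bound: "n \<le> card D" if "P n" for n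
  proof -
    obtain T where "T \<subseteq> S" "lin_indep T" "card T = n" using \<open>P n\<close> unfolding P_def by blast
    then show ?thesis using lin_indep_card_le[OF _ assms(1), of T] assms(2) by auto
  qed
  obtain T where T: "T \<subseteq> S" "lin_indep T" "card T = Greatest P"
    using GreatestI_nat[of P 0 "card D", OF \<open>P 0\<close> bound] unfolding P_def by auto
  have "\<not> lin_indep (insert y T)" if "y \<in> S" "y \<notin> T" for y
  proof
    assume "lin_indep (insert y T)"
    moreover have "finite T" using lin_indep_finite[OF T(2)] .
    ultimately have "P (Suc (card T))"
      using T(1) that unfolding P_def by (intro exI[of _ "insert y T"]) auto
    then show False using Greatest_le_nat[of P _ "card D", OF _ bound] T(3) by fastforce
  qed
  with T show ?thesis using that by blast
qed

lemma annihilator_vanishes_on_dependent: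
  fixes h :: "'i \<Rightarrow> real"
  assumes "lin_indep T" "\<not> lin_indep (insert y T)"
    "\<And>t. t \<in> T \<Longrightarrow> (\<Sum>p\<in>D. h p * t p) = 0"
  shows "(\<Sum>p\<in>D. h p * y p) = 0"
proof (cases "y \<in> T")
  case False
  have "finite T" using lin_indep_finite[OF assms(1)] .
  with assms(2) obtain c where c: "\<forall>p. (\<Sum>t\<in>insert y T. c t * t p) = 0" "\<exists>t\<in>insert y T. c t \<noteq> 0"
    unfolding lin_indep_def by auto
  have comb: "c y * y p + (\<Sum>t\<in>T. c t * t p) = 0" for p
    using c(1) False \<open>finite T\<close> by simp
  have "c y \<noteq> 0"
  proof
    assume "c y = 0"
    then have "\<forall>t\<in>T. c t = 0" using comb assms(1) unfolding lin_indep_def by simp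
    with c(2) \<open>c y = 0\<close> show False by auto
  qed
  have "0 = (\<Sum>p\<in>D. h p * (c y * y p + (\<Sum>t\<in>T. c t * t p)))" using comb by simp
  also have "\<dots> = c y * (\<Sum>p\<in>D. h p * y p) + (\<Sum>t\<in>T. c t * (\<Sum>p\<in>D. h p * t p))"
    by (simp add: algebra_simps sum.distrib sum_distrib_left sum.swap[of _ D])
  also have "\<dots> = c y * (\<Sum>p\<in>D. h p * y p)" using assms(3) by simp
  finally show ?thesis using \<open>c y \<noteq> 0\<close> by simp
qed (use assms(3) in simp)

lemma lin_indep_annihilator_eq_0:
  fixes h :: "'i \<Rightarrow> real"
  assumes "lin_indep T" "finite D" "\<And>t p. t \<in> T \<Longrightarrow> p \<notin> D \<Longrightarrow> t p = 0"
    "card T = card D" "\<And>t. t \<in> T \<Longrightarrow> (\<Sum>p\<in>D. h p * t p) = 0" "p \<in> D"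
  shows "h p = 0"
proof (rule ccontr)
  assume "h p \<noteq> 0"
  define z where "z q = (if q \<in> D then h q else 0)" for q
  have "0 < h p * h p" using \<open>h p \<noteq> 0\<close> by (meson not_real_square_gt_zero)
  also have "\<dots> \<le> (\<Sum>q\<in>D. h q * h q)"
    using assms(2,6) by (intro member_le_sum) auto
  finally have pos: "(\<Sum>q\<in>D. h q * z q) > 0" unfolding z_def by simp
  then have "z \<notin> T" using assms(5) by force
  have "lin_indep (insert z T)"
    unfolding lin_indep_def
  proof (intro conjI allI impI)
    show "finite (insert z T)" using lin_indep_finite[OF assms(1)] by simp
    fix c assume "\<forall>q. (\<Sum>t\<in>insert z T. c t * t q) = 0"
    then have comb: "c z * z q + (\<Sum>t\<in>T. c t * t q) = 0" for q
      using \<open>z \<notin> T\<close> assms(1) unfolding lin_indep_def by simp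
    have "0 = (\<Sum>q\<in>D. h q * (c z * z q + (\<Sum>t\<in>T. c t * t q)))" using comb by simp
    also have "\<dots> = c z * (\<Sum>q\<in>D. h q * z q) + (\<Sum>t\<in>T. c t * (\<Sum>q\<in>D. h q * t q))"
      by (simp add: algebra_simps sum.distrib sum_distrib_left sum.swap[of _ D])
    also have "\<dots> = c z * (\<Sum>q\<in>D. h q * z q)" using assms(5) by simp
    finally have "c z = 0" using pos by simp
    with comb assms(1) show "\<forall>t\<in>insert z T. c t = 0" unfolding lin_indep_def by simp
  qed
  then have "card (insert z T) \<le> card D"
    by (rule lin_indep_card_le[OF _ assms(2)]) (use assms(3) in \<open>auto simp: z_def\<close>)
  with \<open>z \<notin> T\<close> assms(1,4) show False unfolding lin_indep_def by simp
qed

lemma inj_on_units: "inj_on (\<lambda>p q. if q = p then (1::real) else 0) (D :: 'i set)"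
proof (rule inj_onI)
  fix x y :: 'i
  assume "(\<lambda>q. if q = x then (1::real) else 0) = (\<lambda>q. if q = y then 1 else 0)"
  then have "(if x = x then (1::real) else 0) = (if x = y then 1 else 0)" by (rule fun_cong)
  then show "x = y" by (simp split: if_splits)
qed

lemma lin_indep_units:
  assumes "finite D"
  shows "lin_indep ((\<lambda>p q. if q = p then (1::real) else 0) ` D)"
  unfolding lin_indep_def
proof (intro conjI allI impI)
  let ?e = "\<lambda>p q. if q = p then (1::real) else 0"
  show "finite (?e ` D)" using assms by simp
  fix c assume c: "\<forall>q. (\<Sum>t\<in>?e ` D. c t * t q) = 0"
  have "c (?e q) = 0" if "q \<in> D" for q
  proof -
    have "(\<Sum>t\<in>?e ` D. c t * t q) = (\<Sum>p\<in>D. c (?e p) * ?e p q)"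
      by (simp add: sum.reindex[OF inj_on_units])
    also have "\<dots> = c (?e q)" using that assms by (simp add: if_distrib cong: if_cong)
    finally show ?thesis using c by simp
  qed
  then show "\<forall>t\<in>?e ` D. c t = 0" by blast
qed

lemma affdim_eq_iff:
  assumes "S \<noteq> {}" "\<And>T. T \<subseteq> S \<Longrightarrow> aff_indep T \<Longrightarrow> card T \<le> k"
  shows "affdim S = int k - 1 \<longleftrightarrow> (\<exists>T\<subseteq>S. aff_indep T \<and> card T = k)"
proof -
  define P where "P n \<longleftrightarrow> (\<exists>T\<subseteq>S. aff_indep T \<and> card T = n)" for n
  have "P 0" unfolding P_def aff_indep_def by (intro exI[of _ "{}"]) simp
  have bound: "n \<le> k" if "P n" for n using that assms(2) unfolding P_def by blast
  have "affdim S = int (Greatest P) - 1" unfolding affdim_def P_def using assms(1) by simp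
  moreover have "P (Greatest P)" using GreatestI_nat[of P 0 k, OF \<open>P 0\<close> bound] .
  moreover have "Greatest P = k" if "P k" using Greatest_equality[of P k, OF that bound] .
  ultimately show ?thesis unfolding P_def by auto
qed

lemma exists_pos_slack:
  fixes f g :: "'b \<Rightarrow> real"
  assumes "finite A" "\<And>a. a \<in> A \<Longrightarrow> f a \<le> u" "\<And>a. a \<in> A \<Longrightarrow> f a = u \<Longrightarrow> g a = 0"
  shows "\<exists>e>0. \<forall>a\<in>A. f a + e * \<bar>g a\<bar> \<le> u"
  using assms
proof (induction A rule: finite_induct)
  case (insert x A)
  then obtain e where e: "e > 0" "\<forall>a\<in>A. f a + e * \<bar>g a\<bar> \<le> u" by auto
  show ?case
  proof (cases "f x = u")
    case True
    then show ?thesis using e insert.prems(2) by auto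
  next
    case False
    then have "f x < u" using insert.prems(1) by force
    define e' where "e' = min e ((u - f x) / (\<bar>g x\<bar> + 1))"
    have "e' > 0" unfolding e'_def using e(1) \<open>f x < u\<close> by simp
    have "e' * \<bar>g x\<bar> \<le> (u - f x) / (\<bar>g x\<bar> + 1) * (\<bar>g x\<bar> + 1)"
      unfolding e'_def using \<open>f x < u\<close> by (intro mult_mono) auto
    then have "f x + e' * \<bar>g x\<bar> \<le> u" by simp
    moreover have "f a + e' * \<bar>g a\<bar> \<le> u" if "a \<in> A" for a
      using e(2) that mult_right_mono[of e' e "\<bar>g a\<bar>"] unfolding e'_def by fastforce
    ultimately show ?thesis using \<open>e' > 0\<close> by blast
  qed
qed (use zero_less_one in blast)

section \<open>The family-variable polytope\<close>

lemma finite_Ups: "finite N \<Longrightarrow> finite (Ups N)"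
  by (rule finite_subset[of _ "N \<times> Pow N"]) (auto simp: Ups_def)

lemma Ups_nonempty:
  assumes "card N \<ge> 2"
  shows "Ups N \<noteq> {}"
proof
  assume empty: "Ups N = {}"
  have singleton: "a = b" if "a \<in> N" "b \<in> N" for a b
  proof (rule ccontr)
    assume "a \<noteq> b"
    then have "(a, {b}) \<in> Ups N" using that unfolding Ups_def by auto
    with empty show False by simp
  qed
  have "finite N" using assms by (intro card_ge_0_finite) simp
  then have "card N \<le> Suc 0" using singleton by (subst card_le_Suc0_iff_eq) auto
  with assms show False by simp
qed

lemma finite_DAGs: "finite N \<Longrightarrow> finite (DAGs N)"
  by (rule finite_subset[of _ "Pow (N \<times> N)"]) (auto simp: DAGs_def)

lemma full_graph_in_DAGs: "full_graph N H \<Longrightarrow> H \<in> DAGs N"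
  unfolding full_graph_def by simp

lemma acyclic_if_rank_increasing:
  fixes f :: "'a \<Rightarrow> nat"
  assumes "\<And>x y. (x, y) \<in> r \<Longrightarrow> f x < f y"
  shows "acyclic r"
proof (rule acyclic_subset)
  show "acyclic (inv_image less_than f)" by (intro wf_acyclic wf_inv_image wf_less_than)
  show "r \<subseteq> inv_image less_than f" using assms by auto
qed

lemma inprod_cong_Ups: "(\<And>p. p \<in> Ups N \<Longrightarrow> ob p = ob' p) \<Longrightarrow> inprod N ob x = inprod N ob' x"
  unfolding inprod_def by simp

lemma inprod_add_scaled: "inprod N (\<lambda>q. ob q + c * h q) x = inprod N ob x + c * inprod N h x"
  unfolding inprod_def by (simp add: algebra_simps sum.distrib sum_distrib_left)

lemma eta_outside_Ups: "p \<notin> Ups N \<Longrightarrow> eta N G p = 0"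
  unfolding eta_def by (cases p) auto

lemma famPoly_outside_Ups: "x \<in> famPoly N \<Longrightarrow> p \<notin> Ups N \<Longrightarrow> x p = 0"
  unfolding famPoly_def using eta_outside_Ups by fastforce

lemma eta_in_famPoly:
  assumes "finite N" "G \<in> DAGs N"
  shows "eta N G \<in> famPoly N"
  unfolding famPoly_def
proof (intro CollectI exI[of _ "\<lambda>H. if H = G then 1 else 0"] conjI)
  show "(\<Sum>H\<in>DAGs N. if H = G then 1 else 0) = (1::real)"
    using assms finite_DAGs[OF assms(1)] by simp
  show "eta N G = (\<lambda>p. \<Sum>H\<in>DAGs N. (if H = G then 1 else 0) * eta N H p)"
  proof
    fix p
    have "(\<Sum>H\<in>DAGs N. (if H = G then 1 else 0) * eta N H p)
        = (\<Sum>H\<in>DAGs N. if H = G then eta N G p else 0)"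
      by (rule sum.cong) auto
    then show "eta N G p = (\<Sum>H\<in>DAGs N. (if H = G then 1 else 0) * eta N H p)"
      using assms finite_DAGs[OF assms(1)] by simp
  qed
qed simp

lemma famPoly_le_if_eta_le:
  assumes "\<And>G. G \<in> DAGs N \<Longrightarrow> inprod N ob (eta N G) \<le> u" "x \<in> famPoly N"
  shows "inprod N ob x \<le> u"
proof -
  obtain l where l: "\<forall>G\<in>DAGs N. 0 \<le> l G" "(\<Sum>G\<in>DAGs N. l G) = 1"
      "x = (\<lambda>p. \<Sum>G\<in>DAGs N. l G * eta N G p)"
    using assms(2) unfolding famPoly_def by blast
  have "inprod N ob x = (\<Sum>G\<in>DAGs N. l G * inprod N ob (eta N G))"
    unfolding inprod_def l(3)
    by (simp add: sum_distrib_left sum.swap[of _ "Ups N"] mult.left_commute)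
  also have "\<dots> \<le> (\<Sum>G\<in>DAGs N. l G * u)"
    using l(1) assms(1) by (intro sum_mono mult_left_mono) auto
  also have "\<dots> = u" using l(2) by (simp flip: sum_distrib_right)
  finally show ?thesis .
qed

lemma zero_in_famPoly:
  assumes "finite N"
  shows "(\<lambda>_. 0) \<in> famPoly N"
proof -
  have "{} \<in> DAGs N" unfolding DAGs_def by (simp add: acyclic_def)
  moreover have "eta N {} = (\<lambda>_. 0)" unfolding eta_def pa_def Ups_def by (auto simp: fun_eq_iff)
  ultimately show ?thesis using eta_in_famPoly[OF assms, of "{}"] by simp
qed

lemma unit_in_famPoly:
  assumes "finite N" "p \<in> Ups N"
  shows "(\<lambda>q. if q = p then 1 else 0) \<in> famPoly N"
proof -
  obtain a B where p: "p = (a, B)" "a \<in> N" "B \<noteq> {}" "B \<subseteq> N - {a}"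
    using assms(2) unfolding Ups_def by auto
  define G where "G = (\<lambda>b. (b, a)) ` B"
  have "acyclic G"
    by (rule acyclic_if_rank_increasing[of _ "\<lambda>x. if x = a then 1 else 0"]) (use p in \<open>auto simp: G_def\<close>)
  then have "G \<in> DAGs N" using p unfolding DAGs_def G_def by auto
  moreover have "pa G x = (if x = a then B else {})" for x unfolding G_def pa_def by auto
  then have "eta N G = (\<lambda>q. if q = p then 1 else 0)"
    using p unfolding eta_def Ups_def by (auto simp: fun_eq_iff)
  ultimately show ?thesis using eta_in_famPoly[OF assms(1), of G] by simp
qed

lemma affdim_famPoly:
  assumes "finite N"
  shows "affdim (famPoly N) = int (card (Ups N))"
proof -
  let ?e = "\<lambda>p q. if q = p then (1::real) else 0"
  let ?T = "insert (\<lambda>_. 0) (?e ` Ups N)"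
  have fin: "finite (Ups N)" using finite_Ups[OF assms] .
  have "card ?T = card (Ups N) + 1"
    using zero_notin_lin_indep[OF lin_indep_units[OF fin]] fin by (simp add: card_image[OF inj_on_units])
  moreover have "?T \<subseteq> famPoly N" using zero_in_famPoly unit_in_famPoly assms by blast
  moreover have "aff_indep ?T" using aff_indep_insert_zero[OF lin_indep_units[OF fin]] .
  moreover have "card T \<le> card (Ups N) + 1" if "T \<subseteq> famPoly N" "aff_indep T" for T
    using aff_indep_card_le[OF that(2) fin] famPoly_outside_Ups that(1) by blast
  ultimately have "affdim (famPoly N) = int (card (Ups N) + 1) - 1"
    using affdim_eq_iff[of "famPoly N" "card (Ups N) + 1"] by blast
  then show ?thesis by simp
qed

lemma facet_defining_iff_lin_indep:
  assumes "finite N" "Ups N \<noteq> {}" "u \<noteq> 0"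
  shows "facet_defining N ob u \<longleftrightarrow> (\<forall>x\<in>famPoly N. inprod N ob x \<le> u) \<and>
    (\<exists>T\<subseteq>{x\<in>famPoly N. inprod N ob x = u}. lin_indep T \<and> card T = card (Ups N))"
proof -
  define F where "F = {x\<in>famPoly N. inprod N ob x = u}"
  have fin: "finite (Ups N)" using finite_Ups[OF assms(1)] .
  have aff_iff_lin: "aff_indep T \<longleftrightarrow> lin_indep T" if "T \<subseteq> F" for T
    using aff_indep_imp_lin_indep_on_hyperplane[of T ob "Ups N" u] lin_indep_imp_aff_indep that assms(3)
    unfolding F_def inprod_def by blast
  have bound: "card T \<le> card (Ups N)" if "T \<subseteq> F" "lin_indep T" for T
    using lin_indep_card_le[OF that(2) fin] famPoly_outside_Ups that(1) unfolding F_def by blast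
  have "affdim F = int (card (Ups N)) - 1 \<longleftrightarrow> (\<exists>T\<subseteq>F. lin_indep T \<and> card T = card (Ups N))"
  proof (cases "F = {}")
    case True
    then show ?thesis using assms(2) fin unfolding affdim_def by auto
  next
    case False
    have "affdim F = int (card (Ups N)) - 1 \<longleftrightarrow> (\<exists>T\<subseteq>F. aff_indep T \<and> card T = card (Ups N))"
      by (rule affdim_eq_iff[OF False]) (use aff_iff_lin bound in blast)
    then show ?thesis using aff_iff_lin by blast
  qed
  then show ?thesis unfolding facet_defining_def F_def affdim_famPoly[OF assms(1)] by simp
qed

section \<open>DAGs presented by lists of families\<close>

text \<open>The coefficient of the family \<open>(a|B)\<close> in \<open>\<langle>o, \<eta>\<^sub>G\<rangle>\<close>: an empty parent set
  has no coordinate in \<open>\<Upsilon>\<close>.\<close>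

definition fam_coeff :: "'a vecU \<Rightarrow> 'a \<Rightarrow> 'a set \<Rightarrow> real" where
  "fam_coeff ob a B = (if B = {} then 0 else ob (a, B))"

lemma pa_subset_DAG:
  assumes "G \<in> DAGs N" "a \<in> N"
  shows "pa G a \<subseteq> N - {a}"
proof -
  have "(a, a) \<notin> G" using assms(1) unfolding DAGs_def acyclic_def by auto
  then show ?thesis using assms unfolding DAGs_def pa_def by auto
qed

lemma inprod_eta:
  assumes "finite N" "G \<in> DAGs N"
  shows "inprod N ob (eta N G) = (\<Sum>a\<in>N. fam_coeff ob a (pa G a))"
proof -
  define A where "A = {a\<in>N. pa G a \<noteq> {}}"
  have "inprod N ob (eta N G) = (\<Sum>p\<in>{p\<in>Ups N. snd p = pa G (fst p)}. ob p)"
    unfolding inprod_def eta_def using finite_Ups[OF assms(1)]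
    by (simp add: sum.inter_filter case_prod_beta if_distrib cong: if_cong)
  also have "{p\<in>Ups N. snd p = pa G (fst p)} = (\<lambda>a. (a, pa G a)) ` A"
    using pa_subset_DAG[OF assms(2)] unfolding A_def Ups_def by auto
  also have "(\<Sum>p\<in>(\<lambda>a. (a, pa G a)) ` A. ob p) = (\<Sum>a\<in>A. ob (a, pa G a))"
    by (subst sum.reindex) (auto intro: inj_onI)
  also have "\<dots> = (\<Sum>a\<in>N. fam_coeff ob a (pa G a))"
    unfolding A_def fam_coeff_def using assms(1) by (auto simp: sum.inter_filter intro!: sum.cong)
  finally show ?thesis .
qed

fun fams_graph :: "('a \<times> 'a set) list \<Rightarrow> ('a \<times> 'a) set" where
  "fams_graph [] = {}"
| "fams_graph ((x, S) # ps) = fams_graph ps \<union> (\<lambda>y. (y, x)) ` S"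

fun topo_fams :: "('a \<times> 'a set) list \<Rightarrow> bool" where
  "topo_fams [] = True"
| "topo_fams ((x, S) # ps) \<longleftrightarrow> x \<notin> fst ` set ps \<and> S \<subseteq> fst ` set ps \<and> topo_fams ps"

lemma fams_graph_subset: "topo_fams ps \<Longrightarrow> fams_graph ps \<subseteq> fst ` set ps \<times> fst ` set ps"
  by (induction ps rule: topo_fams.induct) auto

lemma fams_graph_rank:
  assumes "topo_fams ps" "(y, x) \<in> fams_graph ps"
  shows "length (dropWhile (\<lambda>q. fst q \<noteq> y) ps) < length (dropWhile (\<lambda>q. fst q \<noteq> x) ps)"
  using assms
proof (induction ps rule: topo_fams.induct)
  case (2 z S ps)
  show ?case
  proof (cases "(y, x) \<in> fams_graph ps")
    case True
    then have "x \<noteq> z" "y \<noteq> z" using fams_graph_subset[of ps] "2.prems"(1) by auto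
    with True 2 show ?thesis by simp
  next
    case False
    then have "x = z" "y \<in> fst ` set ps" using "2.prems" by auto
    then show ?thesis using "2.prems"(1) length_dropWhile_le[of _ ps] by (auto simp: le_imp_less_Suc)
  qed
qed simp

lemma fams_graph_in_DAGs:
  assumes "topo_fams ps"
  shows "fams_graph ps \<in> DAGs (fst ` set ps)"
proof -
  have "acyclic (fams_graph ps)"
    by (rule acyclic_if_rank_increasing[of _ "\<lambda>z. length (dropWhile (\<lambda>q. fst q \<noteq> z) ps)"])
      (rule fams_graph_rank[OF assms])
  then show ?thesis using fams_graph_subset[OF assms] unfolding DAGs_def by blast
qed

lemma pa_fams_graph: "topo_fams ps \<Longrightarrow> (x, S) \<in> set ps \<Longrightarrow> pa (fams_graph ps) x = S"
proof (induction ps rule: topo_fams.induct)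
  case (2 z T ps)
  have "pa (fams_graph ps) z = {}" using fams_graph_subset[of ps] "2.prems"(1) unfolding pa_def by auto
  moreover have "z \<noteq> x" if "(x, S) \<in> set ps" using that "2.prems"(1) by force
  ultimately show ?case using 2 unfolding pa_def by auto
qed simp

definition fams_value :: "'a vecU \<Rightarrow> ('a \<times> 'a set) list \<Rightarrow> real" where
  "fams_value ob ps = (\<Sum>(x, S)\<leftarrow>ps. fam_coeff ob x S)"

lemma fams_value_append: "fams_value ob (ps @ qs) = fams_value ob ps + fams_value ob qs"
  unfolding fams_value_def by simp

lemma inprod_eta_fams_graph:
  assumes "topo_fams ps"
  shows "inprod (fst ` set ps) ob (eta (fst ` set ps) (fams_graph ps)) = fams_value ob ps"
proof -
  have "distinct (map fst ps)" using assms by (induction ps rule: topo_fams.induct) auto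
  then have "(\<Sum>a\<in>fst ` set ps. fam_coeff ob a (pa (fams_graph ps) a))
      = (\<Sum>a\<leftarrow>map fst ps. fam_coeff ob a (pa (fams_graph ps) a))"
    using sum.distinct_set_conv_list[of "map fst ps"] by simp
  also have "\<dots> = fams_value ob ps"
    unfolding fams_value_def map_map
    by (intro arg_cong[where f = sum_list] map_cong) (auto simp: pa_fams_graph[OF assms])
  finally show ?thesis using inprod_eta[OF _ fams_graph_in_DAGs[OF assms]] by simp
qed

fun order_fams :: "'a set \<Rightarrow> 'a list \<Rightarrow> ('a \<times> 'a set) list" where
  "order_fams B [] = []"
| "order_fams B (x # xs) = (x, set xs \<union> B) # order_fams B xs"

lemma fst_set_order_fams [simp]: "fst ` set (order_fams B xs) = set xs"
  by (induction xs) auto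

lemma order_fams_append: "order_fams B (xs @ ys) = order_fams (set ys \<union> B) xs @ order_fams B ys"
  by (induction xs) (auto simp: Un_assoc)

lemma topo_fams_order_fams_append:
  "distinct xs \<Longrightarrow> set xs \<inter> fst ` set ps = {} \<Longrightarrow> B \<subseteq> fst ` set ps \<Longrightarrow> topo_fams ps
   \<Longrightarrow> topo_fams (order_fams B xs @ ps)"
  by (induction xs) (auto simp: image_Un)

lemma topo_fams_order_fams: "distinct xs \<Longrightarrow> topo_fams (order_fams {} xs)"
  using topo_fams_order_fams_append[of xs "[]" "{}"] by simp

lemma inprod_eta_order_fams:
  assumes "distinct xs" "set xs = N"
  shows "inprod N ob (eta N (fams_graph (order_fams {} xs))) = fams_value ob (order_fams {} xs)"
  using inprod_eta_fams_graph[OF topo_fams_order_fams[OF assms(1)], of ob] assms(2) by simp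

lemma full_graph_order_fams:
  assumes "distinct xs" "set xs = N"
  shows "full_graph N (fams_graph (order_fams {} xs))"
proof -
  have "topo_fams (order_fams {} xs)" using topo_fams_order_fams[OF assms(1)] .
  moreover have "(a, b) \<in> fams_graph (order_fams B ys) \<or> (b, a) \<in> fams_graph (order_fams B ys)"
    if "a \<in> set ys" "b \<in> set ys" "a \<noteq> b" for a b B and ys :: "'a list"
    using that by (induction ys) auto
  ultimately show ?thesis
    unfolding full_graph_def using fams_graph_in_DAGs assms(2) by fastforce
qed

section \<open>Standardized supermodular functions and their marginals\<close>

definition marginal :: "('a set \<Rightarrow> real) \<Rightarrow> 'a vecU" where
  "marginal m = (\<lambda>(a, B). m (insert a B) - m B)"

lemma marginal_cong_Ups:
  assumes "\<And>S. S \<subseteq> N \<Longrightarrow> m S = m' S" "q \<in> Ups N"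
  shows "marginal m q = marginal m' q"
proof -
  obtain a B where "q = (a, B)" "insert a B \<subseteq> N" "B \<subseteq> N" using assms(2) unfolding Ups_def by auto
  then show ?thesis using assms(1) unfolding marginal_def by simp
qed

lemma standardized_empty: "standardized N m \<Longrightarrow> m {} = 0"
  unfolding standardized_def by simp

lemma fam_coeff_marginal:
  assumes "standardized N m" "\<forall>p\<in>Ups N. ob p = marginal m p" "a \<in> N" "B \<subseteq> N - {a}"
  shows "fam_coeff ob a B = m (insert a B) - m B"
proof (cases "B = {}")
  case True
  then show ?thesis using assms(1,3) unfolding standardized_def fam_coeff_def by simp
next
  case False
  then have "(a, B) \<in> Ups N" using assms(3,4) unfolding Ups_def by auto
  with False assms(2) show ?thesis unfolding fam_coeff_def marginal_def by auto
qed

lemma fams_value_order_fams_marginal: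
  assumes "standardized N m" "\<forall>p\<in>Ups N. ob p = marginal m p"
    "distinct xs" "set xs \<union> B \<subseteq> N" "set xs \<inter> B = {}"
  shows "fams_value ob (order_fams B xs) = m (set xs \<union> B) - m B"
  using assms(3-5)
proof (induction xs)
  case (Cons x xs)
  then have "fam_coeff ob x (set xs \<union> B) = m (insert x (set xs \<union> B)) - m (set xs \<union> B)"
    by (intro fam_coeff_marginal[OF assms(1,2)]) auto
  with Cons show ?case by (simp add: fams_value_def)
qed (simp add: fams_value_def)

lemma top_eq_if_tight:
  assumes "finite N" "standardized N m" "\<forall>p\<in>Ups N. ob p = marginal m p"
    "\<forall>H. full_graph N H \<longrightarrow> inprod N ob (eta N H) = u"
  shows "u = m N"
proof -
  obtain xs where xs: "distinct xs" "set xs = N" using finite_distinct_list[OF assms(1)] by blast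
  have "u = inprod N ob (eta N (fams_graph (order_fams {} xs)))"
    using assms(4) full_graph_order_fams[OF xs] by simp
  also have "\<dots> = m N - m {}"
    using inprod_eta_order_fams[OF xs] fams_value_order_fams_marginal[OF assms(2,3) xs(1)] xs(2)
    by simp
  finally show ?thesis using standardized_empty[OF assms(2)] by simp
qed

lemma supermodularD:
  "supermodular N m \<Longrightarrow> U \<subseteq> N \<Longrightarrow> V \<subseteq> N \<Longrightarrow> m U + m V \<le> m (U \<union> V) + m (U \<inter> V)"
  unfolding supermodular_def by blast

lemma supermodular_marginal_mono:
  assumes "supermodular N m" "A \<subseteq> B" "B \<subseteq> N" "a \<in> N" "a \<notin> B"
  shows "m (insert a A) - m A \<le> m (insert a B) - m B"
proof -
  have "m (insert a A) + m B \<le> m (insert a A \<union> B) + m (insert a A \<inter> B)"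
    using assms(2-4) by (intro supermodularD[OF assms(1)]) auto
  moreover have "insert a A \<union> B = insert a B" "insert a A \<inter> B = A" using assms(2,5) by auto
  ultimately show ?thesis by simp
qed

lemma acyclic_has_sink:
  assumes "finite V" "V \<noteq> {}" "G \<subseteq> V \<times> V" "acyclic G"
  obtains s where "s \<in> V" "\<And>b. (s, b) \<notin> G"
proof -
  have "finite G" using assms(1,3) by (meson finite_SigmaI finite_subset)
  then have "wf (G\<inverse>)" using assms(4) by (rule finite_acyclic_wf_converse)
  then obtain s where "s \<in> V" "\<forall>y. (y, s) \<in> G\<inverse> \<longrightarrow> y \<notin> V"
    using assms(2) unfolding wf_eq_minimal by blast
  with assms(3) that show ?thesis by blast
qed

lemma sum_marginals_pa_le:
  assumes "supermodular N m" "finite V" "V \<subseteq> N" "G \<subseteq> V \<times> V" "acyclic G"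
  shows "(\<Sum>a\<in>V. m (insert a (pa G a)) - m (pa G a)) \<le> m V - m {}"
  using assms(2-5)
proof (induction V arbitrary: G rule: finite_remove_induct)
  case (remove V)
  obtain s where s: "s \<in> V" "\<And>b. (s, b) \<notin> G"
    using acyclic_has_sink[OF remove.hyps(1,2) remove.prems(2,3)] by blast
  define V' where "V' = V - {s}"
  define G' where "G' = G \<inter> V' \<times> V'"
  have pa_eq: "pa G' a = pa G a" if "a \<in> V'" for a
    using that s(2) remove.prems(2) unfolding pa_def G'_def V'_def by auto
  have "(\<Sum>a\<in>V'. m (insert a (pa G' a)) - m (pa G' a)) \<le> m V' - m {}"
    using remove.IH[OF s(1), of G'] remove.prems acyclic_subset[OF remove.prems(3)]
    unfolding G'_def V'_def by auto
  moreover have "m (insert s (pa G s)) - m (pa G s) \<le> m V - m V'"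
  proof -
    have "(s, s) \<notin> G" using s(2) by blast
    then have "pa G s \<subseteq> V'" using remove.prems(2) unfolding pa_def V'_def by auto
    moreover have "insert s V' = V" using s(1) unfolding V'_def by auto
    ultimately show ?thesis
      using supermodular_marginal_mono[OF assms(1), of "pa G s" V' s] remove.prems(1) s(1)
      unfolding V'_def by auto
  qed
  moreover have "(\<Sum>a\<in>V. m (insert a (pa G a)) - m (pa G a))
      = (m (insert s (pa G s)) - m (pa G s)) + (\<Sum>a\<in>V'. m (insert a (pa G' a)) - m (pa G' a))"
    using sum.remove[OF remove.hyps(1) s(1)] pa_eq unfolding V'_def by simp
  ultimately show ?case by linarith
qed simp

lemma inprod_marginal_eta_le:
  assumes "finite N" "std_supermod N m" "G \<in> DAGs N"
  shows "inprod N (marginal m) (eta N G) \<le> m N"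
proof -
  have std: "standardized N m" and sup: "supermodular N m"
    using assms(2) unfolding std_supermod_def by auto
  have "inprod N (marginal m) (eta N G) = (\<Sum>a\<in>N. fam_coeff (marginal m) a (pa G a))"
    by (rule inprod_eta[OF assms(1,3)])
  also have "\<dots> = (\<Sum>a\<in>N. m (insert a (pa G a)) - m (pa G a))"
    using fam_coeff_marginal[OF std] pa_subset_DAG[OF assms(3)] by simp
  also have "\<dots> \<le> m N - m {}"
    using sum_marginals_pa_le[OF sup assms(1) order_refl] assms(3) unfolding DAGs_def by blast
  finally show ?thesis using standardized_empty[OF std] by simp
qed

lemma inprod_marginal_le_top:
  assumes "finite N" "std_supermod N m" "x \<in> famPoly N"
  shows "inprod N (marginal m) x \<le> m N"
  using famPoly_le_if_eta_le[OF inprod_marginal_eta_le[OF assms(1,2)] assms(3)] .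

lemma eq_if_marginal_eq:
  assumes "finite N" "standardized N m1" "standardized N m2"
    "\<And>p. p \<in> Ups N \<Longrightarrow> marginal m1 p = marginal m2 p" "S \<subseteq> N"
  shows "m1 S = m2 S"
proof -
  have "finite S" using assms(1,5) by (rule finite_subset[rotated])
  then show ?thesis using assms(5)
  proof (induction S rule: finite_induct)
    case (insert a B)
    show ?case
    proof (cases "B = {}")
      case True
      then show ?thesis using assms(2,3) insert.prems unfolding standardized_def by auto
    next
      case False
      then have "(a, B) \<in> Ups N" using insert unfolding Ups_def by auto
      then show ?thesis using assms(4) insert unfolding marginal_def by fastforce
    qed
  qed (simp add: standardized_empty[OF assms(2)] standardized_empty[OF assms(3)])
qed

lemma std_supermod_nonneg:
  assumes "finite N" "std_supermod N m" "S \<subseteq> N"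
  shows "0 \<le> m S"
proof -
  have "finite S" using assms(1,3) by (rule finite_subset[rotated])
  then show ?thesis using assms(3)
  proof (induction S rule: finite_induct)
    case (insert a B)
    then have "m {a} - m {} \<le> m (insert a B) - m B"
      using assms(2) by (intro supermodular_marginal_mono[of N]) (auto simp: std_supermod_def)
    moreover have "m {a} = 0" "m {} = 0"
      using assms(2) insert.prems unfolding std_supermod_def standardized_def by auto
    ultimately show ?case using insert by simp
  qed (use assms(2) standardized_empty[of N m] in \<open>simp add: std_supermod_def\<close>)
qed

lemma std_supermod_le_top:
  assumes "finite N" "std_supermod N m" "S \<subseteq> N"
  shows "m S \<le> m N"
proof -
  have "m S + m (N - S) \<le> m (S \<union> (N - S)) + m (S \<inter> (N - S))"
    using assms(2,3) unfolding std_supermod_def by (intro supermodularD) auto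
  moreover have "S \<union> (N - S) = N" "S \<inter> (N - S) = {}" using assms(3) by auto
  ultimately have "m S + m (N - S) \<le> m N + m {}" by (simp only:)
  moreover have "m {} = 0" using assms(2) standardized_empty unfolding std_supermod_def by blast
  ultimately show ?thesis using std_supermod_nonneg[OF assms(1,2), of "N - S"] by simp
qed

lemma std_supermod_scale: "0 \<le> c \<Longrightarrow> std_supermod N m \<Longrightarrow> std_supermod N (\<lambda>S. c * m S)"
  unfolding std_supermod_def standardized_def supermodular_def
  by (auto simp flip: distrib_left intro: mult_left_mono)

lemma extreme_ssm_top_pos:
  assumes "finite N" "extreme_ssm N m"
  shows "0 < m N"
proof -
  have "std_supermod N m" using assms(2) unfolding extreme_ssm_def by blast
  moreover obtain T where "T \<subseteq> N" "m T \<noteq> 0" using assms(2) unfolding extreme_ssm_def by blast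
  ultimately have "0 < m T" "m T \<le> m N"
    using std_supermod_nonneg[OF assms(1)] std_supermod_le_top[OF assms(1)] by (auto simp: less_le)
  then show ?thesis by simp
qed

lemma extreme_ssm_summand:
  assumes "finite N" "extreme_ssm N m" "std_supermod N m1" "std_supermod N m2"
    "\<And>S. S \<subseteq> N \<Longrightarrow> m S = m1 S + m2 S" "S \<subseteq> N"
  shows "m1 S = m1 N / m N * m S"
proof -
  obtain c where c: "\<forall>S\<subseteq>N. m1 S = c * m S"
    using assms(2)[unfolded extreme_ssm_def] assms(3-5) by blast
  then show ?thesis using extreme_ssm_top_pos[OF assms(1,2)] assms(6) by simp
qed

section \<open>The set function of an inequality tight at all full graphs\<close>

text \<open>\<open>m(S)\<close> is the score of the full graph of an arbitrary ordering of \<open>S\<close>; tightness at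
  full graphs makes it independent of the ordering (\<open>induced_setfun_eq\<close>).\<close>

definition induced_setfun :: "'a vecU \<Rightarrow> 'a set \<Rightarrow> real" where
  "induced_setfun ob S = fams_value ob (order_fams {} (SOME xs. distinct xs \<and> set xs = S))"

lemma fams_value_full_order:
  assumes "\<forall>H. full_graph N H \<longrightarrow> inprod N ob (eta N H) = u" "distinct xs" "set xs = N"
  shows "fams_value ob (order_fams {} xs) = u"
  using assms(1) full_graph_order_fams[OF assms(2,3)] inprod_eta_order_fams[OF assms(2,3), of ob]
  by simp

lemma induced_setfun_eq:
  assumes "finite N" "\<forall>H. full_graph N H \<longrightarrow> inprod N ob (eta N H) = u"
    "distinct xs" "set xs \<subseteq> N"
  shows "induced_setfun ob (set xs) = fams_value ob (order_fams {} xs)"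
proof -
  obtain rs where rs: "distinct rs" "set rs = N - set xs"
    using finite_distinct_list[of "N - set xs"] assms(1) by auto
  \<comment> \<open>prefixing the same ordering of the remaining nodes makes both orderings full\<close>
  have completed: "fams_value ob (order_fams (set xs) rs) + fams_value ob (order_fams {} ys) = u"
    if "distinct ys" "set ys = set xs" for ys
    using fams_value_full_order[OF assms(2), of "rs @ ys"] rs that assms(4)
    by (auto simp: order_fams_append fams_value_append)
  have "\<exists>ys. distinct ys \<and> set ys = set xs" using assms(3) by blast
  then show ?thesis
    unfolding induced_setfun_def
    by (rule someI2_ex) (use completed completed[OF assms(3) refl] in auto)
qed

lemma fams_value_order_fams_induced:
  assumes "finite N" "\<forall>H. full_graph N H \<longrightarrow> inprod N ob (eta N H) = u"
    "distinct xs" "set xs \<inter> B = {}" "S = set xs \<union> B" "S \<subseteq> N"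
  shows "fams_value ob (order_fams B xs) = induced_setfun ob S - induced_setfun ob B"
proof -
  obtain bs where bs: "distinct bs" "set bs = B"
    using finite_distinct_list[of B] finite_subset[OF _ assms(1)] assms(5,6) by auto
  have "induced_setfun ob S = fams_value ob (order_fams {} (xs @ bs))"
    using induced_setfun_eq[OF assms(1,2), of "xs @ bs"] assms(3-6) bs by auto
  also have "\<dots> = fams_value ob (order_fams B xs) + induced_setfun ob B"
    using induced_setfun_eq[OF assms(1,2) bs(1)] assms(5,6) bs
    by (simp add: order_fams_append fams_value_append)
  finally show ?thesis by simp
qed

lemma induced_setfun_top:
  assumes "finite N" "\<forall>H. full_graph N H \<longrightarrow> inprod N ob (eta N H) = u"
  shows "induced_setfun ob N = u"
proof -
  obtain xs where xs: "distinct xs" "set xs = N" using finite_distinct_list[OF assms(1)] by blast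
  then show ?thesis
    using induced_setfun_eq[OF assms xs(1)] fams_value_full_order[OF assms(2) xs] by simp
qed

lemma standardized_induced_setfun:
  assumes "finite N" "\<forall>H. full_graph N H \<longrightarrow> inprod N ob (eta N H) = u"
  shows "standardized N (induced_setfun ob)"
  unfolding standardized_def
proof (intro allI impI)
  fix S assume S: "S \<subseteq> N" "card S \<le> 1"
  show "induced_setfun ob S = 0"
  proof (cases "S = {}")
    case True
    then show ?thesis using induced_setfun_eq[OF assms, of "[]"] by (simp add: fams_value_def)
  next
    case False
    have "finite S" using S(1) assms(1) by (rule finite_subset)
    with False S(2) obtain a where "S = {a}" by (auto simp: le_Suc_eq card_1_singleton_iff)
    then show ?thesis
      using induced_setfun_eq[OF assms, of "[a]"] S(1) by (simp add: fams_value_def fam_coeff_def)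
  qed
qed

lemma marginal_induced_setfun:
  assumes "finite N" "\<forall>H. full_graph N H \<longrightarrow> inprod N ob (eta N H) = u" "p \<in> Ups N"
  shows "ob p = marginal (induced_setfun ob) p"
proof -
  obtain a B where p: "p = (a, B)" "a \<in> N" "B \<noteq> {}" "B \<subseteq> N - {a}"
    using assms(3) unfolding Ups_def by auto
  then have "fams_value ob (order_fams B [a]) = induced_setfun ob (insert a B) - induced_setfun ob B"
    using fams_value_order_fams_induced[OF assms(1,2), of "[a]" B "insert a B"] by auto
  then show ?thesis using p unfolding marginal_def fams_value_def fam_coeff_def by simp
qed

lemma supermodular_induced_setfun:
  assumes "finite N" "\<forall>G\<in>DAGs N. inprod N ob (eta N G) \<le> u"
    "\<forall>H. full_graph N H \<longrightarrow> inprod N ob (eta N H) = u"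
  shows "supermodular N (induced_setfun ob)"
  unfolding supermodular_def
proof (intro allI impI)
  fix U V assume UV: "U \<subseteq> N" "V \<subseteq> N"
  let ?m = "induced_setfun ob"
  have fin: "finite U" "finite V" "finite (N - (U \<union> V))" using UV assms(1) finite_subset by auto
  obtain ws us vs rs where orders: "distinct ws" "set ws = U \<inter> V" "distinct us" "set us = U - V"
    "distinct vs" "set vs = V - U" "distinct rs" "set rs = N - (U \<union> V)"
    using fin by (meson finite_distinct_list finite_Diff finite_Int)
  \<comment> \<open>a DAG whose families realise the four increments in the supermodular inequality\<close>
  define ps where "ps = order_fams (U \<union> V) rs @ order_fams (U \<inter> V) vs
      @ order_fams (U \<inter> V) us @ order_fams {} ws"
  have topo: "topo_fams ps" unfolding ps_def using orders
    by (intro topo_fams_order_fams_append topo_fams_order_fams) (auto simp: image_Un)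
  have nodes: "fst ` set ps = N" unfolding ps_def using orders UV by (auto simp: image_Un)
  have "fams_value ob ps \<le> u"
    using assms(2) fams_graph_in_DAGs[OF topo] inprod_eta_fams_graph[OF topo] nodes by auto
  moreover have "fams_value ob ps
      = (?m N - ?m (U \<union> V)) + (?m V - ?m (U \<inter> V)) + (?m U - ?m (U \<inter> V)) + (?m (U \<inter> V) - ?m {})"
  proof -
    note increment = fams_value_order_fams_induced[OF assms(1,3)]
    have "fams_value ob (order_fams (U \<union> V) rs) = ?m N - ?m (U \<union> V)"
      by (rule increment[OF orders(7)]) (use orders UV in auto)
    moreover have "fams_value ob (order_fams (U \<inter> V) vs) = ?m V - ?m (U \<inter> V)"
      by (rule increment[OF orders(5)]) (use orders UV in auto)
    moreover have "fams_value ob (order_fams (U \<inter> V) us) = ?m U - ?m (U \<inter> V)"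
      by (rule increment[OF orders(3)]) (use orders UV in auto)
    moreover have "fams_value ob (order_fams {} ws) = ?m (U \<inter> V) - ?m {}"
      by (rule increment[OF orders(1)]) (use orders UV in auto)
    ultimately show ?thesis unfolding ps_def fams_value_append by simp
  qed
  moreover have "?m N = u" "?m {} = 0"
    using induced_setfun_top[OF assms(1,3)] standardized_induced_setfun[OF assms(1,3)]
    by (auto simp: standardized_empty)
  ultimately show "?m U + ?m V \<le> ?m (U \<union> V) + ?m (U \<inter> V)" by linarith
qed

lemma std_supermod_induced_setfun:
  assumes "finite N" "\<forall>G\<in>DAGs N. inprod N ob (eta N G) \<le> u"
    "\<forall>H. full_graph N H \<longrightarrow> inprod N ob (eta N H) = u"
  shows "std_supermod N (induced_setfun ob)"
  using standardized_induced_setfun[OF assms(1,3)] supermodular_induced_setfun[OF assms]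
  unfolding std_supermod_def by blast

section \<open>Facets tight at full graphs versus extreme rays\<close>

lemma exists_valid_tight_perturbation:
  assumes "finite N" "\<forall>G\<in>DAGs N. inprod N ob (eta N G) \<le> u"
    "\<forall>H. full_graph N H \<longrightarrow> inprod N ob (eta N H) = u"
    "\<And>G. G \<in> DAGs N \<Longrightarrow> inprod N ob (eta N G) = u \<Longrightarrow> inprod N h (eta N G) = 0"
  obtains e where "e > 0"
    "\<And>s. \<bar>s\<bar> \<le> 1 \<Longrightarrow> \<forall>G\<in>DAGs N. inprod N (\<lambda>q. ob q + s * e * h q) (eta N G) \<le> u"
    "\<And>s. \<forall>H. full_graph N H \<longrightarrow> inprod N (\<lambda>q. ob q + s * e * h q) (eta N H) = u"
proof -
  obtain e where e: "e > 0" "\<forall>G\<in>DAGs N. inprod N ob (eta N G) + e * \<bar>inprod N h (eta N G)\<bar> \<le> u"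
    using exists_pos_slack[OF finite_DAGs[OF assms(1)],
        where f = "\<lambda>G. inprod N ob (eta N G)" and g = "\<lambda>G. inprod N h (eta N G)"] assms(2,4)
    by blast
  have "s * e * v \<le> e * \<bar>v\<bar>" if "\<bar>s\<bar> \<le> 1" for s v :: real
  proof -
    have "s * e * v \<le> \<bar>s * e * v\<bar>" by (rule abs_ge_self)
    also have "\<dots> = \<bar>s\<bar> * e * \<bar>v\<bar>" using e(1) by (simp add: abs_mult)
    also have "\<dots> \<le> e * \<bar>v\<bar>" using that e(1) by (simp add: mult_left_le_one_le)
    finally show ?thesis .
  qed
  with e have "\<forall>G\<in>DAGs N. inprod N (\<lambda>q. ob q + s * e * h q) (eta N G) \<le> u" if "\<bar>s\<bar> \<le> 1" for s
    using that by (auto simp: inprod_add_scaled intro: order_trans[rotated])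
  moreover have "\<forall>H. full_graph N H \<longrightarrow> inprod N (\<lambda>q. ob q + s * e * h q) (eta N H) = u" for s
  proof (intro allI impI)
    fix H assume "full_graph N H"
    then have "inprod N ob (eta N H) = u" using assms(3) by blast
    moreover have "inprod N h (eta N H) = 0"
      using assms(4)[OF full_graph_in_DAGs[OF \<open>full_graph N H\<close>] calculation] .
    ultimately show "inprod N (\<lambda>q. ob q + s * e * h q) (eta N H) = u" by (simp add: inprod_add_scaled)
  qed
  ultimately show ?thesis using that e(1) by blast
qed

lemma face_annihilator_eq_0_if_extreme:
  assumes fin: "finite N" and ext: "extreme_ssm N m" and ob: "\<forall>q\<in>Ups N. ob q = marginal m q"
    and tight: "\<forall>H. full_graph N H \<longrightarrow> inprod N ob (eta N H) = u"
    and h: "\<And>G. G \<in> DAGs N \<Longrightarrow> inprod N ob (eta N G) = u \<Longrightarrow> inprod N h (eta N G) = 0"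
    and p: "p \<in> Ups N"
  shows "h p = 0"
proof -
  have ssm: "std_supermod N m" using ext unfolding extreme_ssm_def by blast
  then have std: "standardized N m" unfolding std_supermod_def by blast
  have u: "u = m N" using top_eq_if_tight[OF fin std ob tight] .
  have "\<forall>G\<in>DAGs N. inprod N ob (eta N G) \<le> u"
    using inprod_marginal_eta_le[OF fin ssm] inprod_cong_Ups[of N ob "marginal m"] ob u by simp
  then obtain e where e: "e > 0"
    and valid: "\<And>s. \<bar>s\<bar> \<le> 1 \<Longrightarrow> \<forall>G\<in>DAGs N. inprod N (\<lambda>q. ob q + s * e * h q) (eta N G) \<le> u"
    and tight': "\<And>s. \<forall>H. full_graph N H \<longrightarrow> inprod N (\<lambda>q. ob q + s * e * h q) (eta N H) = u"
    using exists_valid_tight_perturbation[OF fin _ tight h] by blast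
  define m' where "m' s = induced_setfun (\<lambda>q. ob q + s * e * h q)" for s
  have ssm': "std_supermod N (\<lambda>S. 1/2 * m' s S)" if "\<bar>s\<bar> \<le> 1" for s
    unfolding m'_def by (intro std_supermod_scale std_supermod_induced_setfun[OF fin valid[OF that] tight']) simp
  have std': "standardized N (m' s)" for s
    unfolding m'_def by (rule standardized_induced_setfun[OF fin tight'])
  have marg': "ob q + s * e * h q = marginal (m' s) q" if "q \<in> Ups N" for s q
    unfolding m'_def using marginal_induced_setfun[OF fin tight' that] .
  \<comment> \<open>the two perturbations average to \<open>ob\<close>, so \<open>m\<close> splits into two standardized supermodular halves\<close>
  have "m S = 1/2 * m' 1 S + 1/2 * m' (-1) S" if "S \<subseteq> N" for S
  proof (rule eq_if_marginal_eq[OF fin std _ _ that])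
    show "standardized N (\<lambda>S. 1/2 * m' 1 S + 1/2 * m' (-1) S)"
      using std'[of 1] std'[of "-1"] unfolding standardized_def by simp
    show "marginal m q = marginal (\<lambda>S. 1/2 * m' 1 S + 1/2 * m' (-1) S) q" if "q \<in> Ups N" for q
      using marg'[OF that, of 1] marg'[OF that, of "-1"] ob that
      by (cases q) (simp add: marginal_def algebra_simps)
  qed
  then have "1/2 * m' 1 S = (1/2 * m' 1 N) / m N * m S" if "S \<subseteq> N" for S
    using extreme_ssm_summand[OF fin ext ssm'[of 1] ssm'[of "-1"]] that by simp
  moreover have "m' 1 N = m N" using induced_setfun_top[OF fin tight'[of 1]] u unfolding m'_def by simp
  ultimately have agree: "m' 1 S = m S" if "S \<subseteq> N" for S
    using that extreme_ssm_top_pos[OF fin ext] by simp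
  have "marginal (m' 1) p = marginal m p" using marginal_cong_Ups[OF agree p] .
  then show "h p = 0" using marg'[OF p, of 1] ob p e(1) by simp
qed

lemma facet_defining_if_extreme:
  assumes fin: "finite N" and ups: "Ups N \<noteq> {}" and ext: "extreme_ssm N m"
    and ob: "\<forall>q\<in>Ups N. ob q = marginal m q"
    and tight: "\<forall>H. full_graph N H \<longrightarrow> inprod N ob (eta N H) = u"
  shows "facet_defining N ob u"
proof -
  have ssm: "std_supermod N m" using ext unfolding extreme_ssm_def by blast
  have u: "u = m N" using top_eq_if_tight[OF fin _ ob tight] ssm unfolding std_supermod_def by blast
  have valid: "\<forall>x\<in>famPoly N. inprod N ob x \<le> u"
    using inprod_marginal_le_top[OF fin ssm] inprod_cong_Ups[of N ob "marginal m"] ob u by simp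
  define F where "F = {x\<in>famPoly N. inprod N ob x = u}"
  have fin_Ups: "finite (Ups N)" using finite_Ups[OF fin] .
  have supp: "\<And>t p. t \<in> F \<Longrightarrow> p \<notin> Ups N \<Longrightarrow> t p = 0"
    using famPoly_outside_Ups unfolding F_def by blast
  obtain T where T: "T \<subseteq> F" "lin_indep T" "\<And>y. y \<in> F \<Longrightarrow> y \<notin> T \<Longrightarrow> \<not> lin_indep (insert y T)"
    by (rule maximal_lin_indep_subset[where D = "Ups N" and S = F]) (auto intro: fin_Ups supp)
  have "card T = card (Ups N)"
  proof (rule ccontr)
    assume "card T \<noteq> card (Ups N)"
    then have "card T < card (Ups N)"
      using lin_indep_card_le[OF T(2) fin_Ups] supp T(1) by fastforce
    then obtain h where h: "\<exists>q\<in>Ups N. h q \<noteq> 0" "\<forall>t\<in>T. inprod N h t = 0"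
      using homogeneous_system_nontrivial_solution[OF lin_indep_finite[OF T(2)] fin_Ups]
      unfolding inprod_def by blast
    have "inprod N h y = 0" if "y \<in> F" for y
    proof (cases "y \<in> T")
      case False
      then show ?thesis
        using annihilator_vanishes_on_dependent[OF T(2) T(3)[OF that False], where D = "Ups N" and h = h] h(2)
        unfolding inprod_def by blast
    qed (use h(2) in blast)
    then have "h q = 0" if "q \<in> Ups N" for q
      using face_annihilator_eq_0_if_extreme[OF fin ext ob tight _ that] eta_in_famPoly[OF fin]
      unfolding F_def by blast
    with h(1) show False by blast
  qed
  moreover have "u \<noteq> 0" using extreme_ssm_top_pos[OF fin ext] u by simp
  ultimately show ?thesis
    using facet_defining_iff_lin_indep[OF fin ups] valid T unfolding F_def by blast
qed

lemma extreme_ssm_if_face_spans: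
  assumes fin: "finite N" and ssm: "std_supermod N m" and top: "m N \<noteq> 0"
    and T: "T \<subseteq> {x\<in>famPoly N. inprod N (marginal m) x = m N}" "lin_indep T" "card T = card (Ups N)"
  shows "extreme_ssm N m"
  unfolding extreme_ssm_def
proof (intro conjI allI impI)
  show "std_supermod N m" by fact
  show "\<exists>S\<subseteq>N. m S \<noteq> 0" using top by blast
  fix m1 m2 assume "std_supermod N m1 \<and> std_supermod N m2 \<and> (\<forall>S\<subseteq>N. m S = m1 S + m2 S)"
  then have ssm1: "std_supermod N m1" and ssm2: "std_supermod N m2"
    and sum: "\<And>S. S \<subseteq> N \<Longrightarrow> m S = m1 S + m2 S" by auto
  have "0 < m N" using std_supermod_nonneg[OF fin ssm order_refl] top by simp
  define c where "c = m1 N / m N"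
  have marg_sum: "marginal m q = marginal m1 q + marginal m2 q" if "q \<in> Ups N" for q
    using marginal_cong_Ups[of N m "\<lambda>S. m1 S + m2 S", OF sum that]
    by (simp add: marginal_def case_prod_beta)
  define h where "h q = marginal m1 q - c * marginal m q" for q
  \<comment> \<open>both summands are valid, and their bounds add up to the tight bound of \<open>m\<close> on \<open>T\<close>\<close>
  have annihilates: "inprod N h t = 0" if "t \<in> T" for t
  proof -
    have t: "t \<in> famPoly N" "inprod N (marginal m) t = m N" using T(1) that by auto
    have "inprod N (marginal m) t = inprod N (marginal m1) t + inprod N (marginal m2) t"
      using marg_sum unfolding inprod_def by (simp add: sum.distrib algebra_simps)
    moreover have "inprod N (marginal m1) t \<le> m1 N" "inprod N (marginal m2) t \<le> m2 N"
      using inprod_marginal_le_top[OF fin ssm1 t(1)] inprod_marginal_le_top[OF fin ssm2 t(1)] .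
    ultimately have "inprod N (marginal m1) t = m1 N" using t(2) sum[OF order_refl] by linarith
    then show ?thesis
      using inprod_add_scaled[of N "marginal m1" "- c" "marginal m" t] t(2) \<open>0 < m N\<close>
      unfolding c_def h_def by simp
  qed
  have supp: "t p = 0" if "t \<in> T" "p \<notin> Ups N" for t p
    using famPoly_outside_Ups[of t N p] T(1) that by auto
  have h_zero: "h q = 0" if "q \<in> Ups N" for q
    by (rule lin_indep_annihilator_eq_0[where D = "Ups N" and h = h, OF T(2) finite_Ups[OF fin] _ T(3) _ that])
      (fact supp, use annihilates in \<open>simp add: inprod_def\<close>)
  have "m1 S = c * m S" if "S \<subseteq> N" for S
  proof (rule eq_if_marginal_eq[OF fin _ _ _ that])
    show "standardized N m1" using ssm1 unfolding std_supermod_def by blast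
    show "standardized N (\<lambda>S. c * m S)" using ssm unfolding std_supermod_def standardized_def by simp
    show "marginal m1 q = marginal (\<lambda>S. c * m S) q" if "q \<in> Ups N" for q
      using h_zero[OF that] unfolding h_def by (simp add: marginal_def case_prod_beta right_diff_distrib)
  qed
  moreover have "0 \<le> c" using std_supermod_nonneg[OF fin ssm1 order_refl] \<open>0 < m N\<close> unfolding c_def by simp
  ultimately show "\<exists>c\<ge>0. \<forall>S\<subseteq>N. m1 S = c * m S" by blast
qed

lemma extreme_if_facet_defining:
  assumes fin: "finite N" and ups: "Ups N \<noteq> {}" and facet: "facet_defining N ob u"
    and tight: "\<forall>H. full_graph N H \<longrightarrow> inprod N ob (eta N H) = u"
  shows "extreme_ssm N (induced_setfun ob) \<and> (\<forall>q\<in>Ups N. ob q = marginal (induced_setfun ob) q)"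
proof -
  let ?m = "induced_setfun ob"
  have valid: "\<forall>G\<in>DAGs N. inprod N ob (eta N G) \<le> u"
    using facet eta_in_famPoly[OF fin] unfolding facet_defining_def by blast
  have ssm: "std_supermod N ?m" using std_supermod_induced_setfun[OF fin valid tight] .
  have marg: "\<forall>q\<in>Ups N. ob q = marginal ?m q" using marginal_induced_setfun[OF fin tight] by blast
  then have same: "inprod N ob x = inprod N (marginal ?m) x" for x by (intro inprod_cong_Ups) blast
  have top: "?m N = u" using induced_setfun_top[OF fin tight] .
  have "u \<noteq> 0"
  proof
    assume "u = 0"
    \<comment> \<open>then \<open>?m\<close> vanishes, the inequality is trivial and its face is all of the polytope\<close>
    then have "?m S = 0" if "S \<subseteq> N" for S
      using std_supermod_nonneg[OF fin ssm that] std_supermod_le_top[OF fin ssm that] top by simp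
    then have "marginal ?m q = 0" if "q \<in> Ups N" for q
      using marginal_cong_Ups[of N ?m "\<lambda>_. 0", OF _ that] by (simp add: marginal_def case_prod_beta)
    then have "{x\<in>famPoly N. inprod N ob x = u} = famPoly N"
      using same \<open>u = 0\<close> unfolding inprod_def by simp
    then show False using facet unfolding facet_defining_def by simp
  qed
  then obtain T where "T \<subseteq> {x\<in>famPoly N. inprod N ob x = u}" "lin_indep T" "card T = card (Ups N)"
    using facet_defining_iff_lin_indep[OF fin ups \<open>u \<noteq> 0\<close>] facet by blast
  then have "extreme_ssm N ?m"
    using extreme_ssm_if_face_spans[OF fin ssm] top same \<open>u \<noteq> 0\<close> by simp
  with marg show ?thesis by blast
qed

theorem theorem2:
  fixes N :: "'a set" and ob :: "'a \<times> 'a set \<Rightarrow> real" and u :: real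
  assumes "finite N" and "card N \<ge> 2"
  shows "(facet_defining N ob u \<and> (\<forall>H. full_graph N H \<longrightarrow> inprod N ob (eta N H) = u))
     \<longleftrightarrow> (\<exists>m. extreme_ssm N m \<and>
            (\<forall>(a, B)\<in>Ups N. ob (a, B) = m (insert a B) - m B) \<and>
            (\<forall>H. full_graph N H \<longrightarrow> inprod N ob (eta N H) = u))"
proof -
  have marginal_iff: "(\<forall>(a, B)\<in>Ups N. ob (a, B) = m (insert a B) - m B) \<longleftrightarrow> (\<forall>q\<in>Ups N. ob q = marginal m q)"
    for m by (auto simp: marginal_def)
  have ups: "Ups N \<noteq> {}" using Ups_nonempty[OF assms(2)] .
  show ?thesis
    unfolding marginal_iff
  proof (intro iffI; elim conjE exE)
    assume "facet_defining N ob u" "\<forall>H. full_graph N H \<longrightarrow> inprod N ob (eta N H) = u"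
    then show "\<exists>m. extreme_ssm N m \<and> (\<forall>q\<in>Ups N. ob q = marginal m q) \<and>
        (\<forall>H. full_graph N H \<longrightarrow> inprod N ob (eta N H) = u)"
      using extreme_if_facet_defining[OF assms(1) ups] by blast
  next
    fix m assume "extreme_ssm N m" "\<forall>q\<in>Ups N. ob q = marginal m q"
      "\<forall>H. full_graph N H \<longrightarrow> inprod N ob (eta N H) = u"
    then show "facet_defining N ob u \<and> (\<forall>H. full_graph N H \<longrightarrow> inprod N ob (eta N H) = u)"
      using facet_defining_if_extreme[OF assms(1) ups] by blast
  qed
qed

end
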